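(* Let $G$ be a connected graph on at least $3$ vertices and let $G'$ be obtained from $G$ by subdividing an edge $e$. Then $rx_3(G')\le rx_3(G)+1$.
   Context: Subdividing an edge $e=uw$ means deleting $e$, adding a new vertex $x$, and adding the edges $xu$ and $xw$. An edge coloring may give adjacent edges the same color; a tree is rainbow if its edges have pairwise distinct colors. For a connected graph on at least $3$ vertices, $rx_3$ is the minimum number of colors in an edge coloring such that every set of $3$ vertices lies in some rainbow tree. *)

theory Defs
  imports Main
begin

definition simple_graph :: "'a set \<Rightarrow> 'a set set \<Rightarrow> bool" where
  "simple_graph V E \<longleftrightarrow> finite V \<and>
     (\<forall>e\<in>E. \<exists>u v. e = {u, v} \<and> u \<noteq> v \<and> u \<in> V \<and> v \<in> V)"

definition adj_rel :: "'a set set \<Rightarrow> ('a \<times> 'a) set" where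
  "adj_rel E = {(u, v). {u, v} \<in> E}"

definition connected_graph :: "'a set \<Rightarrow> 'a set set \<Rightarrow> bool" where
  "connected_graph V E \<longleftrightarrow> V \<noteq> {} \<and> (\<forall>u\<in>V. \<forall>v\<in>V. (u, v) \<in> (adj_rel E)\<^sup>*)"

definition has_cycle :: "'a set set \<Rightarrow> bool" where
  "has_cycle E \<longleftrightarrow> (\<exists>vs. length vs \<ge> 3 \<and> distinct vs \<and>
      (\<forall>i. Suc i < length vs \<longrightarrow> {vs ! i, vs ! Suc i} \<in> E) \<and> {last vs, hd vs} \<in> E)"

definition is_tree :: "'a set \<Rightarrow> 'a set set \<Rightarrow> bool" where
  "is_tree W T \<longleftrightarrow> simple_graph W T \<and> connected_graph W T \<and> \<not> has_cycle T"

definition rainbow_3_colouring :: "'a set \<Rightarrow> 'a set set \<Rightarrow> ('a set \<Rightarrow> nat) \<Rightarrow> nat \<Rightarrow> bool" where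
  "rainbow_3_colouring V E c k \<longleftrightarrow> c ` E \<subseteq> {..<k} \<and>
     (\<forall>S. S \<subseteq> V \<and> card S = 3 \<longrightarrow>
        (\<exists>W T. W \<subseteq> V \<and> T \<subseteq> E \<and> S \<subseteq> W \<and> is_tree W T \<and> inj_on c T))"

definition rx3 :: "'a set \<Rightarrow> 'a set set \<Rightarrow> nat" where
  "rx3 V E = (LEAST k. \<exists>c. rainbow_3_colouring V E c k)"

definition subdivide_V :: "'a set \<Rightarrow> 'a \<Rightarrow> 'a set" where
  "subdivide_V V x = insert x V"

definition subdivide_E :: "'a set set \<Rightarrow> 'a \<Rightarrow> 'a \<Rightarrow> 'a \<Rightarrow> 'a set set" where
  "subdivide_E E u w x = (E - {{u, w}}) \<union> {{x, u}, {x, w}}"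

end

theory Submission
  imports Defs
begin

text \<open>Take a colouring c of G with rx3(G) colours. In G' the edge xu inherits the colour of uw
  and xw gets one fresh colour. A rainbow tree of G spanning a 3-set survives in G': if it uses uw,
  replace uw by the path u-x-w; otherwise it is untouched. When the 3-set contains x, use a
  rainbow tree of G for a 3-set containing w and the other two vertices (this needs |V| \<ge> 3),
  and hang x on w by the fresh edge xw.\<close>

lemma adj_rel_iff [simp]: "(a, b) \<in> adj_rel E \<longleftrightarrow> {a, b} \<in> E"
  by (simp add: adj_rel_def)

lemma simple_graph_finite: "simple_graph V E \<Longrightarrow> finite V"
  by (simp add: simple_graph_def)

lemma simple_graph_edgeD:
  assumes "simple_graph V E" "{a, b} \<in> E"
  shows "a \<in> V" "b \<in> V" "a \<noteq> b"
proof -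
  obtain a' b' where "{a, b} = {a', b'}" "a' \<noteq> b'" "a' \<in> V" "b' \<in> V"
    using assms unfolding simple_graph_def by blast
  then show "a \<in> V" "b \<in> V" "a \<noteq> b"
    by (auto simp: doubleton_eq_iff)
qed

lemma simple_graph_edge_avoids: "simple_graph V E \<Longrightarrow> x \<notin> V \<Longrightarrow> e \<in> E \<Longrightarrow> x \<notin> e"
  unfolding simple_graph_def by auto

lemma simple_graph_insert_vertex:
  assumes "simple_graph W T" "x \<notin> W" "T' \<subseteq> T \<union> (\<lambda>v. {x, v}) ` W"
  shows "simple_graph (insert x W) T'"
  unfolding simple_graph_def
proof (intro conjI ballI)
  show "finite (insert x W)"
    using simple_graph_finite[OF assms(1)] by simp
next
  fix e assume "e \<in> T'"
  then consider "e \<in> T" | v where "v \<in> W" "e = {x, v}"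
    using assms(3) by blast
  then show "\<exists>a b. e = {a, b} \<and> a \<noteq> b \<and> a \<in> insert x W \<and> b \<in> insert x W"
  proof cases
    case 1
    then show ?thesis
      using assms(1) unfolding simple_graph_def by blast
  next
    case 2
    then show ?thesis
      using assms(2) by blast
  qed
qed

lemma connected_graph_insert_vertex:
  assumes conn: "connected_graph W T"
    and edges: "\<And>a b. {a, b} \<in> T \<Longrightarrow> (a, b) \<in> (adj_rel T')\<^sup>*"
    and "{x, v} \<in> T'" "v \<in> W"
  shows "connected_graph (insert x W) T'"
proof -
  have "(adj_rel T)\<^sup>* \<subseteq> (adj_rel T')\<^sup>*"
    using edges by (intro rtrancl_subset_rtrancl) auto
  then have W: "(p, q) \<in> (adj_rel T')\<^sup>*" if "p \<in> W" "q \<in> W" for p q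
    using conn that unfolding connected_graph_def by blast
  have "(x, v) \<in> adj_rel T'" "(v, x) \<in> adj_rel T'"
    using \<open>{x, v} \<in> T'\<close> by (auto simp: insert_commute)
  then have "(x, q) \<in> (adj_rel T')\<^sup>*" "(q, x) \<in> (adj_rel T')\<^sup>*" if "q \<in> W" for q
    using W[OF \<open>v \<in> W\<close> that] W[OF that \<open>v \<in> W\<close>]
    by (meson converse_rtrancl_into_rtrancl rtrancl_into_rtrancl)+
  then show ?thesis
    using W unfolding connected_graph_def by auto
qed

text \<open>Cycles as lists read cyclically, so that a cycle can be rotated to start at any of its vertices.\<close>

definition cyclic_walk :: "'a set set \<Rightarrow> 'a list \<Rightarrow> bool" where
  "cyclic_walk T vs \<longleftrightarrow> (\<forall>i<length vs. {vs ! i, vs ! (Suc i mod length vs)} \<in> T)"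

lemma has_cycle_iff_cyclic_walk:
  "has_cycle T \<longleftrightarrow> (\<exists>vs. length vs \<ge> 3 \<and> distinct vs \<and> cyclic_walk T vs)"
proof -
  have "cyclic_walk T vs \<longleftrightarrow>
      (\<forall>i. Suc i < length vs \<longrightarrow> {vs ! i, vs ! Suc i} \<in> T) \<and> {last vs, hd vs} \<in> T"
    if "vs \<noteq> []" for vs :: "'a list"
  proof
    assume walk: "cyclic_walk T vs"
    have "{vs ! i, vs ! Suc i} \<in> T" if "Suc i < length vs" for i
      using walk[unfolded cyclic_walk_def, rule_format, of i] that by simp
    moreover have "{last vs, hd vs} \<in> T"
      using walk[unfolded cyclic_walk_def, rule_format, of "length vs - 1"] that
      by (simp add: last_conv_nth hd_conv_nth)
    ultimately show "(\<forall>i. Suc i < length vs \<longrightarrow> {vs ! i, vs ! Suc i} \<in> T) \<and> {last vs, hd vs} \<in> T"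
      by blast
  next
    assume path: "(\<forall>i. Suc i < length vs \<longrightarrow> {vs ! i, vs ! Suc i} \<in> T) \<and> {last vs, hd vs} \<in> T"
    show "cyclic_walk T vs"
      unfolding cyclic_walk_def
    proof (intro allI impI)
      fix i assume "i < length vs"
      then consider "Suc i < length vs" | "i = length vs - 1"
        by linarith
      then show "{vs ! i, vs ! (Suc i mod length vs)} \<in> T"
        using path that by cases (auto simp: last_conv_nth hd_conv_nth)
    qed
  qed
  then show ?thesis
    unfolding has_cycle_def by (metis list.size(3) not_numeral_le_zero)
qed

lemma cyclic_walk_rotate:
  assumes "cyclic_walk T vs"
  shows "cyclic_walk T (rotate k vs)"
  unfolding cyclic_walk_def
proof (intro allI impI)
  let ?n = "length vs"
  fix i assume "i < length (rotate k vs)"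
  then have i: "i < ?n" and "0 < ?n" by auto
  define j where "j = (k + i) mod ?n"
  have "j < ?n" "rotate k vs ! i = vs ! j"
    using i \<open>0 < ?n\<close> by (simp_all add: j_def nth_rotate)
  moreover have "(k + Suc i mod ?n) mod ?n = Suc j mod ?n"
    by (simp add: j_def mod_Suc_eq mod_add_right_eq)
  then have "rotate k vs ! (Suc i mod ?n) = vs ! (Suc j mod ?n)"
    using nth_rotate[of "Suc i mod ?n" vs k] \<open>0 < ?n\<close> by simp
  ultimately show "{rotate k vs ! i, rotate k vs ! (Suc i mod length (rotate k vs))} \<in> T"
    using assms unfolding cyclic_walk_def by simp
qed

lemma has_cycle_mono: "has_cycle T \<Longrightarrow> T \<subseteq> T' \<Longrightarrow> has_cycle T'"
  unfolding has_cycle_def by blast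

lemma has_cycle_cases:
  assumes "has_cycle T"
  obtains "has_cycle {e \<in> T. x \<notin> e}"
  | zs where "distinct (x # zs)" "length zs \<ge> 2" "{x, hd zs} \<in> T" "{x, last zs} \<in> T"
      "\<And>i. Suc i < length zs \<Longrightarrow> {zs ! i, zs ! Suc i} \<in> T"
proof -
  obtain vs where vs: "length vs \<ge> 3" "distinct vs" "cyclic_walk T vs"
    using assms has_cycle_iff_cyclic_walk by blast
  show thesis
  proof (cases "x \<in> set vs")
    case False
    have "cyclic_walk {e \<in> T. x \<notin> e} vs"
      using vs(3) False unfolding cyclic_walk_def
      by (metis (mono_tags, lifting) empty_iff insert_iff length_pos_if_in_set mem_Collect_eq
          mod_less_divisor nth_mem)
    then show thesis
      using that(1) vs has_cycle_iff_cyclic_walk by blast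
  next
    case True
    then obtain i where "i < length vs" "vs ! i = x"
      by (auto simp: in_set_conv_nth)
    moreover have "vs \<noteq> []"
      using vs(1) by auto
    ultimately have "hd (rotate i vs) = x"
      using nth_rotate[of 0 vs i] by (simp add: hd_conv_nth)
    then obtain zs where ys: "rotate i vs = x # zs"
      using vs(1) by (cases "rotate i vs") auto
    have walk: "cyclic_walk T (x # zs)"
      using cyclic_walk_rotate[OF vs(3), of i] ys by simp
    have "distinct (x # zs)"
      using vs(2) ys by (metis distinct_rotate)
    moreover have "length zs \<ge> 2"
      using vs(1) arg_cong[OF ys, of length] by simp
    moreover have "{x, hd zs} \<in> T"
      using walk[unfolded cyclic_walk_def, rule_format, of 0] \<open>length zs \<ge> 2\<close>
      by (cases zs) auto
    moreover have "{x, last zs} \<in> T"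
      using walk[unfolded cyclic_walk_def, rule_format, of "length zs"] \<open>length zs \<ge> 2\<close>
      by (cases zs) (auto simp: last_conv_nth insert_commute)
    moreover have "{zs ! j, zs ! Suc j} \<in> T" if "Suc j < length zs" for j
      using walk[unfolded cyclic_walk_def, rule_format, of "Suc j"] that by simp
    ultimately show thesis
      using that(2) by blast
  qed
qed

lemma distinct_hd_neq_last: "distinct zs \<Longrightarrow> length zs \<ge> 2 \<Longrightarrow> hd zs \<noteq> last zs"
  by (cases zs) auto

lemma subdivide_E_edge_avoiding: "e \<in> subdivide_E T u w x \<Longrightarrow> x \<notin> e \<Longrightarrow> e \<in> T - {{u, w}}"
  unfolding subdivide_E_def by auto

lemma subdivide_E_edge_at_new:
  assumes "{x, v} \<in> subdivide_E T u w x" "\<forall>e\<in>T. x \<notin> e"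
  shows "v \<in> {u, w}"
  using assms unfolding subdivide_E_def by (auto simp: doubleton_eq_iff)

lemma is_tree_add_leaf:
  assumes tree: "is_tree W T" and "w \<in> W" "x \<notin> W"
  shows "is_tree (insert x W) (insert {x, w} T)"
proof -
  have sg: "simple_graph W T" and "connected_graph W T" and acyclic: "\<not> has_cycle T"
    using tree unfolding is_tree_def by auto
  have avoid: "x \<notin> e" if "e \<in> T" for e
    using simple_graph_edge_avoids[OF sg \<open>x \<notin> W\<close> that] .
  have "insert {x, w} T \<subseteq> T \<union> (\<lambda>v. {x, v}) ` W"
    using \<open>w \<in> W\<close> by blast
  then have "simple_graph (insert x W) (insert {x, w} T)"
    by (rule simple_graph_insert_vertex[OF sg \<open>x \<notin> W\<close>])
  moreover have "connected_graph (insert x W) (insert {x, w} T)"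
    by (rule connected_graph_insert_vertex[OF \<open>connected_graph W T\<close> _ _ \<open>w \<in> W\<close>])
      auto
  moreover have "\<not> has_cycle (insert {x, w} T)"
  proof
    assume "has_cycle (insert {x, w} T)"
    then show False
    proof (cases rule: has_cycle_cases[where x = x])
      case 1
      have "{e \<in> insert {x, w} T. x \<notin> e} \<subseteq> T"
        by blast
      then show False
        using 1 acyclic has_cycle_mono by blast
    next
      case (2 zs)
      have "{x, hd zs} = {x, w}" "{x, last zs} = {x, w}"
        using 2(3,4) avoid[of "{x, hd zs}"] avoid[of "{x, last zs}"] by blast+
      then have "hd zs = last zs"
        by (auto simp: doubleton_eq_iff)
      then show False
        using distinct_hd_neq_last[of zs] 2(1,2) by simp
    qed
  qed
  ultimately show ?thesis
    unfolding is_tree_def by blast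
qed

lemma is_tree_subdivide:
  assumes tree: "is_tree W T" and "{u, w} \<in> T" "x \<notin> W"
  shows "is_tree (insert x W) (subdivide_E T u w x)"
proof -
  let ?T' = "subdivide_E T u w x"
  have sg: "simple_graph W T" and "connected_graph W T" and acyclic: "\<not> has_cycle T"
    using tree unfolding is_tree_def by auto
  have "u \<in> W" "w \<in> W"
    using simple_graph_edgeD[OF sg \<open>{u, w} \<in> T\<close>] by auto
  have avoid: "x \<notin> e" if "e \<in> T" for e
    using simple_graph_edge_avoids[OF sg \<open>x \<notin> W\<close> that] .
  have "?T' \<subseteq> T \<union> (\<lambda>v. {x, v}) ` W"
    using \<open>u \<in> W\<close> \<open>w \<in> W\<close> unfolding subdivide_E_def by blast
  then have "simple_graph (insert x W) ?T'"
    by (rule simple_graph_insert_vertex[OF sg \<open>x \<notin> W\<close>])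
  moreover have "connected_graph (insert x W) ?T'"
    using \<open>connected_graph W T\<close>
  proof (rule connected_graph_insert_vertex)
    have "(u, x) \<in> adj_rel ?T'" "(x, w) \<in> adj_rel ?T'" "(w, x) \<in> adj_rel ?T'" "(x, u) \<in> adj_rel ?T'"
      by (auto simp: subdivide_E_def insert_commute)
    then have uw: "(u, w) \<in> (adj_rel ?T')\<^sup>*" "(w, u) \<in> (adj_rel ?T')\<^sup>*"
      by (meson r_into_rtrancl rtrancl_into_rtrancl)+
    show "(a, b) \<in> (adj_rel ?T')\<^sup>*" if "{a, b} \<in> T" for a b
    proof (cases "{a, b} = {u, w}")
      case True
      then have "(a, b) = (u, w) \<or> (a, b) = (w, u)"
        by (simp add: doubleton_eq_iff)
      then show ?thesis
        using uw by blast
    next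
      case False
      then have "{a, b} \<in> ?T'"
        using that unfolding subdivide_E_def by blast
      then show ?thesis
        by (intro r_into_rtrancl) simp
    qed
  qed (use \<open>u \<in> W\<close> in \<open>simp_all add: subdivide_E_def\<close>)
  moreover have "\<not> has_cycle ?T'"
  proof
    assume "has_cycle ?T'"
    then show False
    proof (cases rule: has_cycle_cases[where x = x])
      case 1
      have "{e \<in> ?T'. x \<notin> e} \<subseteq> T"
        using subdivide_E_edge_avoiding by fastforce
      then show False
        using 1 acyclic has_cycle_mono by blast
    next
      case (2 zs)
      have path: "{zs ! i, zs ! Suc i} \<in> T - {{u, w}}" if "Suc i < length zs" for i
      proof (rule subdivide_E_edge_avoiding)
        show "{zs ! i, zs ! Suc i} \<in> ?T'"
          using 2(5)[OF that] .
        show "x \<notin> {zs ! i, zs ! Suc i}"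
          using 2(1) that by (auto dest: nth_mem)
      qed
      have "\<forall>e\<in>T. x \<notin> e"
        using avoid by blast
      then have "hd zs \<in> {u, w}" "last zs \<in> {u, w}"
        using subdivide_E_edge_at_new[OF 2(3)] subdivide_E_edge_at_new[OF 2(4)] by blast+
      moreover have "hd zs \<noteq> last zs"
        using distinct_hd_neq_last[of zs] 2(1,2) by simp
      ultimately have ends: "{last zs, hd zs} = {u, w}"
        by auto
      show False
      proof (cases "length zs = 2")
        case True
        then have "{zs ! 0, zs ! 1} = {last zs, hd zs}"
          by (cases zs) (auto simp: last_conv_nth)
        then show False
          using path[of 0] True ends by simp
      next
        case False
        then have "has_cycle T"
          unfolding has_cycle_def
          using 2(1,2) path ends \<open>{u, w} \<in> T\<close> by (intro exI[of _ zs]) auto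
        then show False
          using acyclic by blast
      qed
    qed
  qed
  ultimately show ?thesis
    unfolding is_tree_def by blast
qed

lemma connected_graph_leaving_edge:
  assumes conn: "connected_graph V E" and "W \<subseteq> V" "a \<in> W" "b \<in> V" "b \<notin> W"
  obtains p q where "{p, q} \<in> E" "p \<in> W" "q \<notin> W"
proof -
  have "(a, b) \<in> (adj_rel E)\<^sup>*"
    using conn assms(2-4) unfolding connected_graph_def by blast
  then have "b \<in> W \<or> (\<exists>p q. {p, q} \<in> E \<and> p \<in> W \<and> q \<notin> W)"
    by (induction rule: rtrancl_induct) (use \<open>a \<in> W\<close> in auto)
  then show thesis
    using that \<open>b \<notin> W\<close> by blast
qed

lemma exists_subtree_card:
  assumes sg: "simple_graph V E" and conn: "connected_graph V E" and "n < card V"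
  shows "\<exists>W T. W \<subseteq> V \<and> T \<subseteq> E \<and> is_tree W T \<and> card W = Suc n"
  using \<open>n < card V\<close>
proof (induction n)
  case 0
  obtain v where "v \<in> V"
    using conn unfolding connected_graph_def by blast
  moreover have "is_tree {v} {}"
    unfolding is_tree_def simple_graph_def connected_graph_def has_cycle_def by auto
  ultimately show ?case
    by (intro exI[of _ "{v}"] exI[of _ "{}"]) auto
next
  case (Suc n)
  then obtain W T where W: "W \<subseteq> V" "T \<subseteq> E" "is_tree W T" "card W = Suc n"
    by auto
  obtain a where "a \<in> W"
    using W(4) by fastforce
  have "W \<noteq> V"
    using W(4) Suc.prems by auto
  then obtain b where "b \<in> V" "b \<notin> W"
    using W(1) by blast
  obtain p q where pq: "{p, q} \<in> E" "p \<in> W" "q \<notin> W"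
    using connected_graph_leaving_edge[OF conn W(1) \<open>a \<in> W\<close> \<open>b \<in> V\<close> \<open>b \<notin> W\<close>] .
  have "q \<in> V"
    using simple_graph_edgeD[OF sg pq(1)] by simp
  moreover have "finite W"
    using W(1) simple_graph_finite[OF sg] finite_subset by blast
  moreover have "{q, p} \<in> E"
    using pq(1) by (simp add: insert_commute)
  ultimately show ?case
    using is_tree_add_leaf[OF W(3) pq(2,3)] W pq(3)
    by (intro exI[of _ "insert q W"] exI[of _ "insert {q, p} T"]) auto
qed

lemma exists_spanning_tree:
  assumes sg: "simple_graph V E" and conn: "connected_graph V E"
  obtains T where "T \<subseteq> E" "is_tree V T"
proof -
  have "finite V" "V \<noteq> {}"
    using sg conn by (auto simp: simple_graph_def connected_graph_def)
  then have "0 < card V"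
    by (simp add: card_gt_0_iff)
  then obtain W T where "W \<subseteq> V" "T \<subseteq> E" "is_tree W T" "card W = Suc (card V - 1)"
    using exists_subtree_card[OF sg conn, of "card V - 1"] by auto
  moreover have "W = V"
    using calculation \<open>finite V\<close> \<open>0 < card V\<close> by (simp add: card_subset_eq)
  ultimately show thesis
    using that by blast
qed

lemma rx3_le: "rainbow_3_colouring V E c k \<Longrightarrow> rx3 V E \<le> k"
  unfolding rx3_def by (blast intro: Least_le)

text \<open>Connectivity is needed only here: without some rainbow colouring, rx3 would be a junk LEAST value.\<close>

lemma rx3_attained:
  assumes sg: "simple_graph V E" and conn: "connected_graph V E"
  shows "\<exists>c. rainbow_3_colouring V E c (rx3 V E)"
proof -
  have "E \<subseteq> Pow V"
  proof
    fix e assume "e \<in> E"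
    then obtain a b where "e = {a, b}"
      using sg unfolding simple_graph_def by blast
    then show "e \<in> Pow V"
      using simple_graph_edgeD[OF sg] \<open>e \<in> E\<close> by blast
  qed
  then have "finite E"
    using simple_graph_finite[OF sg] by (meson finite_Pow_iff finite_subset)
  then obtain c :: "'a set \<Rightarrow> nat" and n where c: "c ` E = {i. i < n}" "inj_on c E"
    using finite_imp_inj_to_nat_seg by blast
  obtain T where T: "T \<subseteq> E" "is_tree V T"
    using exists_spanning_tree[OF sg conn] .
  have "inj_on c T"
    using c(2) T(1) by (rule inj_on_subset)
  have "rainbow_3_colouring V E c n"
    unfolding rainbow_3_colouring_def
  proof (intro conjI allI impI)
    show "c ` E \<subseteq> {..<n}"
      using c(1) by auto
    show "\<exists>W T. W \<subseteq> V \<and> T \<subseteq> E \<and> S \<subseteq> W \<and> is_tree W T \<and> inj_on c T"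
      if "S \<subseteq> V \<and> card S = 3" for S
      using that T \<open>inj_on c T\<close> by blast
  qed
  then have "\<exists>k c. rainbow_3_colouring V E c k"
    by blast
  then show ?thesis
    unfolding rx3_def by (rule LeastI_ex)
qed

definition subdivision_colouring ::
    "('a set \<Rightarrow> nat) \<Rightarrow> nat \<Rightarrow> 'a \<Rightarrow> 'a \<Rightarrow> 'a \<Rightarrow> 'a set \<Rightarrow> nat" where
  "subdivision_colouring c k u w x e =
     (if e = {x, w} then k else if e = {x, u} then c {u, w} else c e)"

lemma subdivision_colouring_old_edge:
  "x \<notin> e \<Longrightarrow> subdivision_colouring c k u w x e = c e"
  unfolding subdivision_colouring_def by auto

lemma subdivision_colouring_range:
  assumes "c ` E \<subseteq> {..<k}" "{u, w} \<in> E" "\<forall>e\<in>E. x \<notin> e"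
  shows "subdivision_colouring c k u w x ` subdivide_E E u w x \<subseteq> {..<k + 1}"
proof -
  have "subdivision_colouring c k u w x e \<in> insert k (c ` E)" if "e \<in> subdivide_E E u w x" for e
    using that assms(2,3) unfolding subdivide_E_def subdivision_colouring_def by auto
  then show ?thesis
    using assms(1) by fastforce
qed

lemma inj_on_subdivision_colouring_leaf:
  assumes inj: "inj_on c T" and T: "\<forall>e\<in>T. x \<notin> e \<and> c e < k"
  shows "inj_on (subdivision_colouring c k u w x) (insert {x, w} T)"
proof -
  let ?c' = "subdivision_colouring c k u w x"
  have old: "?c' e = c e" if "e \<in> T" for e
    using T that by (simp add: subdivision_colouring_old_edge)
  have "inj_on ?c' T"
    using inj inj_on_cong[of T ?c' c, OF old] by simp
  moreover have "?c' ` T = c ` T"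
    by (rule image_cong[OF refl old])
  moreover have "?c' {x, w} = k" "k \<notin> c ` T"
    using T by (auto simp: subdivision_colouring_def)
  ultimately show ?thesis
    by auto
qed

lemma inj_on_subdivision_colouring_subdivide:
  assumes inj: "inj_on c T" and "{u, w} \<in> T" "u \<noteq> w" and T: "\<forall>e\<in>T. x \<notin> e \<and> c e < k"
  shows "inj_on (subdivision_colouring c k u w x) (subdivide_E T u w x)"
proof -
  let ?c' = "subdivision_colouring c k u w x"
  let ?T0 = "T - {{u, w}}"
  have c'_new: "?c' {x, u} = c {u, w}" "?c' {x, w} = k"
    using \<open>u \<noteq> w\<close> by (auto simp: subdivision_colouring_def doubleton_eq_iff)
  have old: "?c' e = c e" if "e \<in> ?T0" for e
    using T that by (simp add: subdivision_colouring_old_edge)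
  have c'_old: "?c' ` ?T0 = c ` ?T0"
    by (rule image_cong[OF refl old])
  have "inj_on ?c' ?T0"
    using inj_on_subset[OF inj, of ?T0] inj_on_cong[of ?T0 ?c' c, OF old] by simp
  moreover have "c {u, w} \<notin> c ` ?T0"
    using inj \<open>{u, w} \<in> T\<close> by (simp add: inj_on_image_mem_iff)
  ultimately have "inj_on ?c' (insert {x, u} ?T0)"
    using c'_new c'_old by auto
  moreover have "k \<notin> ?c' ` insert {x, u} ?T0"
    using c'_new c'_old T \<open>{u, w} \<in> T\<close> by auto
  moreover have "subdivide_E T u w x = insert {x, w} (insert {x, u} ?T0)"
    unfolding subdivide_E_def by auto
  ultimately show ?thesis
    using c'_new by auto
qed

lemma rainbow_tree_in_subdivision:
  assumes sg: "simple_graph V E" and "{u, w} \<in> E" "x \<notin> V"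
    and range: "c ` E \<subseteq> {..<k}"
    and tree: "W \<subseteq> V" "T \<subseteq> E" "is_tree W T" "inj_on c T"
    and S: "S \<subseteq> insert x W" "x \<in> S \<Longrightarrow> w \<in> W"
  shows "\<exists>W' T'. W' \<subseteq> subdivide_V V x \<and> T' \<subseteq> subdivide_E E u w x \<and> S \<subseteq> W' \<and>
      is_tree W' T' \<and> inj_on (subdivision_colouring c k u w x) T'"
proof -
  let ?c' = "subdivision_colouring c k u w x"
  have "x \<notin> W"
    using tree(1) \<open>x \<notin> V\<close> by blast
  have T: "\<forall>e\<in>T. x \<notin> e \<and> c e < k"
    using simple_graph_edge_avoids[OF sg \<open>x \<notin> V\<close>] range tree(2) by blast
  have "u \<noteq> w"
    using simple_graph_edgeD(3)[OF sg \<open>{u, w} \<in> E\<close>] .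
  have "insert x W \<subseteq> subdivide_V V x"
    using tree(1) unfolding subdivide_V_def by blast
  consider (subdivided) "{u, w} \<in> T" | (leaf) "{u, w} \<notin> T" "x \<in> S" | (untouched) "{u, w} \<notin> T" "x \<notin> S"
    by blast
  then show ?thesis
  proof cases
    case subdivided
    have "subdivide_E T u w x \<subseteq> subdivide_E E u w x"
      using tree(2) unfolding subdivide_E_def by blast
    then show ?thesis
      using is_tree_subdivide[OF tree(3) subdivided \<open>x \<notin> W\<close>] S(1) \<open>insert x W \<subseteq> subdivide_V V x\<close>
        inj_on_subdivision_colouring_subdivide[OF tree(4) subdivided \<open>u \<noteq> w\<close> T]
      by (intro exI[of _ "insert x W"] exI[of _ "subdivide_E T u w x"]) simp
  next
    case leaf
    have "insert {x, w} T \<subseteq> subdivide_E E u w x"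
      using tree(2) leaf(1) unfolding subdivide_E_def by blast
    then show ?thesis
      using is_tree_add_leaf[OF tree(3) S(2)[OF leaf(2)] \<open>x \<notin> W\<close>] S(1) \<open>insert x W \<subseteq> subdivide_V V x\<close>
        inj_on_subdivision_colouring_leaf[OF tree(4) T]
      by (intro exI[of _ "insert x W"] exI[of _ "insert {x, w} T"]) simp
  next
    case untouched
    have "T \<subseteq> subdivide_E E u w x"
      using tree(2) untouched(1) unfolding subdivide_E_def by blast
    moreover have "inj_on ?c' T"
      using inj_on_subdivision_colouring_leaf[OF tree(4) T] by (rule inj_on_subset) blast
    moreover have "S \<subseteq> W"
      using S(1) untouched(2) by blast
    ultimately show ?thesis
      using tree(3) \<open>insert x W \<subseteq> subdivide_V V x\<close>
      by (intro exI[of _ W] exI[of _ T]) simp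
  qed
qed

lemma rainbow_3_colouring_subdivide:
  assumes sg: "simple_graph V E" and "card V \<ge> 3" "{u, w} \<in> E" "x \<notin> V"
    and col: "rainbow_3_colouring V E c k"
  shows "rainbow_3_colouring (subdivide_V V x) (subdivide_E E u w x)
      (subdivision_colouring c k u w x) (k + 1)"
  unfolding rainbow_3_colouring_def
proof (intro conjI allI impI)
  have range: "c ` E \<subseteq> {..<k}"
    using col unfolding rainbow_3_colouring_def by blast
  have "\<forall>e\<in>E. x \<notin> e"
    using simple_graph_edge_avoids[OF sg \<open>x \<notin> V\<close>] by blast
  then show "subdivision_colouring c k u w x ` subdivide_E E u w x \<subseteq> {..<k + 1}"
    by (rule subdivision_colouring_range[OF range \<open>{u, w} \<in> E\<close>])
  fix S assume S: "S \<subseteq> subdivide_V V x \<and> card S = 3"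
  then have "finite S"
    by (metis card.infinite zero_neq_numeral)
  define A where "A = (if x \<in> S then insert w (S - {x}) else S)"
  have "w \<in> V"
    using simple_graph_edgeD(2)[OF sg \<open>{u, w} \<in> E\<close>] .
  then have "A \<subseteq> V"
    using S unfolding A_def subdivide_V_def by auto
  have "card A \<le> 3"
  proof (cases "x \<in> S")
    case True
    then have "card (S - {x}) = 2"
      using S \<open>finite S\<close> by simp
    then show ?thesis
      using True card_insert_le_m1[of 3 "S - {x}" w] unfolding A_def by simp
  next
    case False
    then show ?thesis
      using S unfolding A_def by simp
  qed
  then obtain B where "A \<subseteq> B" "B \<subseteq> V" "card B = 3"
    using exists_subset_between[OF _ \<open>card V \<ge> 3\<close> \<open>A \<subseteq> V\<close> simple_graph_finite[OF sg]] by blast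
  then have "\<exists>W T. W \<subseteq> V \<and> T \<subseteq> E \<and> B \<subseteq> W \<and> is_tree W T \<and> inj_on c T"
    using col unfolding rainbow_3_colouring_def by blast
  then obtain W T where tree: "W \<subseteq> V" "T \<subseteq> E" "B \<subseteq> W" "is_tree W T" "inj_on c T"
    by blast
  have "S \<subseteq> insert x W" "x \<in> S \<Longrightarrow> w \<in> W"
    using \<open>A \<subseteq> B\<close> tree(3) unfolding A_def by (auto split: if_splits)
  then show "\<exists>W T. W \<subseteq> subdivide_V V x \<and> T \<subseteq> subdivide_E E u w x \<and> S \<subseteq> W \<and> is_tree W T \<and>
      inj_on (subdivision_colouring c k u w x) T"
    by (rule rainbow_tree_in_subdivision[OF sg \<open>{u, w} \<in> E\<close> \<open>x \<notin> V\<close> range tree(1,2,4,5)])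
qed

theorem corollary3:
  fixes V :: "'a set" and E :: "'a set set" and u w x :: 'a
  assumes "simple_graph V E"
    and "connected_graph V E"
    and "card V \<ge> 3"
    and "{u, w} \<in> E"
    and "x \<notin> V"
  shows "rx3 (subdivide_V V x) (subdivide_E E u w x) \<le> rx3 V E + 1"
proof -
  obtain c where "rainbow_3_colouring V E c (rx3 V E)"
    using rx3_attained[OF assms(1,2)] by blast
  then have "rainbow_3_colouring (subdivide_V V x) (subdivide_E E u w x)
      (subdivision_colouring c (rx3 V E) u w x) (rx3 V E + 1)"
    using rainbow_3_colouring_subdivide[OF assms(1,3,4,5)] by blast
  then show ?thesis
    by (rule rx3_le)
qed

end
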